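(* For integers $s,t\ge0$ and real polynomials $f,g$, let $$\langle f(x),g(y)\rangle_{s,t}=\int_{(0,1)\times(0,1)}\frac{x^sy^s}{x+y}f(x)g(y)\left(\frac{1-x}{1+x}\right)^t\left(\frac{1-y}{1+y}\right)^tdx\,dy,\qquad \mathcal L_{s,t}(f)=\sqrt2\int_0^1\frac{x^s}{1+x}f(x)\left(\frac{1-x}{1+x}\right)^tdx.$$ Then for all $s,t\ge0$ and all polynomials $f,g$: (1) $\langle f(x),g(y)\rangle_{s+1,t}=\langle xf(x),yg(y)\rangle_{s,t}$; (2) $\langle f(x),g(y)\rangle_{s,t+1}=\langle f(x),g(y)\rangle_{s,t}-\mathcal L_{s,t}(f)\,\mathcal L_{s,t}(g)$. *)

theory Defs
  imports "HOL-Analysis.Analysis" "HOL-Computational_Algebra.Polynomial"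
begin

definition bform :: "nat \<Rightarrow> nat \<Rightarrow> real poly \<Rightarrow> real poly \<Rightarrow> real" where
  "bform s t f g =
     (LINT p : {0<..<1::real} \<times> {0<..<1::real} | lborel.
        (fst p ^ s * snd p ^ s / (fst p + snd p)) * poly f (fst p) * poly g (snd p)
        * ((1 - fst p) / (1 + fst p)) ^ t * ((1 - snd p) / (1 + snd p)) ^ t)"

definition Lfun :: "nat \<Rightarrow> nat \<Rightarrow> real poly \<Rightarrow> real" where
  "Lfun s t f = sqrt 2 *
     (LINT x : {0<..<1::real} | lborel. x ^ s / (1 + x) * poly f x * ((1 - x) / (1 + x)) ^ t)"

end

theory Submission
  imports Defs
begin

(* Both identities already hold for the integrands. For (2) the identity
     1 - (1-x)/(1+x) * (1-y)/(1+y) = 2 (x+y) / ((1+x)(1+y))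
   cancels the singular kernel 1/(x+y), so the integrands at t and t+1 differ by
   2 a(x) b(y) with sqrt 2 * (integral of a) = L(f) and likewise for b; Fubini finishes.
   The bilinear integrand is integrable since 1/(x+y) <= x^(-1/2) y^(-1/2). *)

lemma (in pair_sigma_finite) integrable_mult_fst_snd:
  fixes a b :: "_ \<Rightarrow> real"
  assumes a: "integrable M1 a" and b: "integrable M2 b"
  shows "integrable (M1 \<Otimes>\<^sub>M M2) (\<lambda>p. a (fst p) * b (snd p))"
proof (rule Fubini_integrable)
  show "(\<lambda>p. a (fst p) * b (snd p)) \<in> borel_measurable (M1 \<Otimes>\<^sub>M M2)"
    using a b by measurable
  show "integrable M1 (\<lambda>x. \<integral>y. norm (a (fst (x, y)) * b (snd (x, y))) \<partial>M2)"
    using a b by (simp add: abs_mult)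
  show "AE x in M1. integrable M2 (\<lambda>y. a (fst (x, y)) * b (snd (x, y)))"
    using b by simp
qed

lemma (in pair_sigma_finite) integral_mult_fst_snd:
  fixes a b :: "_ \<Rightarrow> real"
  assumes "integrable M1 a" and "integrable M2 b"
  shows "(\<integral>p. a (fst p) * b (snd p) \<partial>(M1 \<Otimes>\<^sub>M M2)) = integral\<^sup>L M1 a * integral\<^sup>L M2 b"
  using integral_fst'[OF integrable_mult_fst_snd[OF assms], symmetric] by simp

lemma set_integrable_powr_unit_interval:
  assumes "a > -1"
  shows "set_integrable lborel {0<..<1::real} (\<lambda>x. x powr a)"
proof -
  have "set_integrable lborel {0..1::real} (\<lambda>x. x powr (a + 1 - 1) * (1 - x) powr (1 - 1))"
    using assms by (intro integrable_Beta) auto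
  then have "set_integrable lborel {0<..<1::real} (\<lambda>x. x powr (a + 1 - 1) * (1 - x) powr (1 - 1))"
    by (rule set_integrable_subset) auto
  moreover have "set_integrable lborel {0<..<1::real} (\<lambda>x. x powr (a + 1 - 1) * (1 - x) powr (1 - 1))
    \<longleftrightarrow> set_integrable lborel {0<..<1::real} (\<lambda>x. x powr a)"
    by (rule set_integrable_cong) auto
  ultimately show ?thesis by simp
qed

lemma one_div_add_le_powr_neg_half:
  fixes x y :: real
  assumes "0 < x" "0 < y"
  shows "1 / (x + y) \<le> x powr (-1/2) * y powr (-1/2)"
proof -
  have "sqrt x * sqrt y \<le> x + y"
    using arith_geo_mean_sqrt[of x y] assms by (simp add: real_sqrt_mult)
  then have "1 / (x + y) \<le> 1 / (sqrt x * sqrt y)"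
    using assms by (intro divide_left_mono) auto
  then show ?thesis
    using assms by (simp add: powr_minus_divide powr_half_sqrt)
qed

lemma one_sub_cayley_mult_cayley_div_add:
  fixes x y :: "'a::field"
  assumes "1 + x \<noteq> 0" "1 + y \<noteq> 0" "x + y \<noteq> 0"
  shows "(1 - (1 - x) / (1 + x) * ((1 - y) / (1 + y))) / (x + y) = 2 / ((1 + x) * (1 + y))"
  using assms by (simp add: divide_simps) (simp add: algebra_simps)

lemma poly_bounded_on_compact:
  fixes p :: "real poly"
  assumes "compact S"
  obtains C where "0 \<le> C" "\<And>x. x \<in> S \<Longrightarrow> \<bar>poly p x\<bar> \<le> C"
proof -
  have "bounded (poly p ` S)"
    using assms by (intro compact_imp_bounded compact_continuous_image) (auto intro!: continuous_intros)
  then show ?thesis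
    using that unfolding bounded_pos by (metis image_eqI less_eq_real_def real_norm_def)
qed

definition bform_integrand :: "nat \<Rightarrow> nat \<Rightarrow> real poly \<Rightarrow> real poly \<Rightarrow> real \<times> real \<Rightarrow> real" where
  "bform_integrand s t f g p = indicator ({0<..<1} \<times> {0<..<1}) p *\<^sub>R
     ((fst p ^ s * snd p ^ s / (fst p + snd p)) * poly f (fst p) * poly g (snd p)
      * ((1 - fst p) / (1 + fst p)) ^ t * ((1 - snd p) / (1 + snd p)) ^ t)"

definition Lfun_integrand :: "nat \<Rightarrow> nat \<Rightarrow> real poly \<Rightarrow> real \<Rightarrow> real" where
  "Lfun_integrand s t f x =
     indicator {0<..<1} x *\<^sub>R (x ^ s / (1 + x) * poly f x * ((1 - x) / (1 + x)) ^ t)"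

lemma bform_eq_integral: "bform s t f g = integral\<^sup>L lborel (bform_integrand s t f g)"
  unfolding bform_def bform_integrand_def set_lebesgue_integral_def ..

lemma Lfun_eq_integral: "Lfun s t f = sqrt 2 * integral\<^sup>L lborel (Lfun_integrand s t f)"
  unfolding Lfun_def Lfun_integrand_def set_lebesgue_integral_def ..

lemma integrable_Lfun_integrand: "integrable lborel (Lfun_integrand s t f)"
proof -
  have "set_integrable lborel {0..1::real} (\<lambda>x. x ^ s / (1 + x) * poly f x * ((1 - x) / (1 + x)) ^ t)"
    unfolding set_integrable_def
    by (intro borel_integrable_compact continuous_intros) auto
  then have "set_integrable lborel {0<..<1::real} (\<lambda>x. x ^ s / (1 + x) * poly f x * ((1 - x) / (1 + x)) ^ t)"
    by (rule set_integrable_subset) auto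
  then show ?thesis
    unfolding set_integrable_def Lfun_integrand_def .
qed

lemma bform_kernel_bound:
  fixes x y :: real
  assumes "0 < x" "x < 1" "0 < y" "y < 1"
  shows "\<bar>x ^ s * y ^ s / (x + y) * ((1 - x) / (1 + x)) ^ t * ((1 - y) / (1 + y)) ^ t\<bar>
    \<le> x powr (-1/2) * y powr (-1/2)"
proof -
  have "\<bar>x ^ s * y ^ s / (x + y) * ((1 - x) / (1 + x)) ^ t * ((1 - y) / (1 + y)) ^ t\<bar>
    = (x ^ s * y ^ s) * (1 / (x + y)) * ((1 - x) / (1 + x)) ^ t * ((1 - y) / (1 + y)) ^ t"
    using assms by (simp add: abs_mult)
  also have "\<dots> \<le> 1 * (x powr (-1/2) * y powr (-1/2)) * 1 * 1"
    using assms one_div_add_le_powr_neg_half[of x y]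
    by (intro mult_mono) (auto simp: power_le_one mult_le_one)
  finally show ?thesis by simp
qed

lemma integrable_bform_integrand: "integrable lborel (bform_integrand s t f g)"
proof -
  obtain Cf Cg where
    Cf: "0 \<le> Cf" "\<And>x. x \<in> {0..1} \<Longrightarrow> \<bar>poly f x\<bar> \<le> Cf" and
    Cg: "0 \<le> Cg" "\<And>x. x \<in> {0..1} \<Longrightarrow> \<bar>poly g x\<bar> \<le> Cg"
    using poly_bounded_on_compact[of "{0..1}"] by (metis compact_Icc)
  define \<phi> :: "real \<Rightarrow> real" where "\<phi> x = indicator {0<..<1} x *\<^sub>R x powr (-1/2)" for x
  have "integrable lborel \<phi>"
    using set_integrable_powr_unit_interval[of "-1/2"] unfolding set_integrable_def \<phi>_def by simp
  then have "integrable lborel (\<lambda>p::real \<times> real. \<phi> (fst p) * \<phi> (snd p))"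
    using lborel_pair.integrable_mult_fst_snd by (simp add: lborel_prod)
  then have "integrable lborel (\<lambda>p. Cf * Cg * (\<phi> (fst p) * \<phi> (snd p)))"
    by (rule integrable_mult_right)
  then show ?thesis
  proof (rule Bochner_Integration.integrable_bound)
    show "bform_integrand s t f g \<in> borel_measurable lborel"
      unfolding measurable_lborel2 bform_integrand_def
      by (intro borel_measurable_continuous_on_indicator continuous_intros)
         (auto simp: borel_open open_Times)
    have "\<bar>bform_integrand s t f g (x, y)\<bar> \<le> \<bar>Cf * Cg * (\<phi> x * \<phi> y)\<bar>" for x y
    proof (cases "0 < x \<and> x < 1 \<and> 0 < y \<and> y < 1")
      case True
      then have "\<bar>bform_integrand s t f g (x, y)\<bar>
        = \<bar>x ^ s * y ^ s / (x + y) * ((1 - x) / (1 + x)) ^ t * ((1 - y) / (1 + y)) ^ t\<bar>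
          * \<bar>poly f x\<bar> * \<bar>poly g y\<bar>"
        by (simp add: bform_integrand_def abs_mult mult_ac)
      also have "\<dots> \<le> (x powr (-1/2) * y powr (-1/2)) * Cf * Cg"
        using True Cf Cg bform_kernel_bound[of x y s t]
        by (intro mult_mono) auto
      finally show ?thesis
        using True Cf Cg by (simp add: \<phi>_def abs_mult mult_ac)
    qed (auto simp: bform_integrand_def)
    then show "AE p in lborel. norm (bform_integrand s t f g p) \<le> norm (Cf * Cg * (\<phi> (fst p) * \<phi> (snd p)))"
      by auto
  qed
qed

lemma bform_integrand_shift_s:
  "bform_integrand (s + 1) t f g = bform_integrand s t ([:0, 1:] * f) ([:0, 1:] * g)"
  by (auto simp: bform_integrand_def mult_ac)

lemma bform_integrand_shift_t:
  "bform_integrand s (t + 1) f g p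
     = bform_integrand s t f g p - 2 * (Lfun_integrand s t f (fst p) * Lfun_integrand s t g (snd p))"
proof (cases "p \<in> {0<..<1} \<times> {0<..<1}")
  case True
  obtain x y where p: "p = (x, y)" and xy: "0 < x" "0 < y"
    using True by auto
  define X Y where "X = (1 - x) / (1 + x)" and "Y = (1 - y) / (1 + y)"
  have "bform_integrand s t f g p - bform_integrand s (t + 1) f g p
    = x ^ s * y ^ s / (x + y) * poly f x * poly g y * X ^ t * Y ^ t
      - x ^ s * y ^ s / (x + y) * poly f x * poly g y * X ^ (t + 1) * Y ^ (t + 1)"
    using True by (simp add: p bform_integrand_def X_def Y_def)
  also have "\<dots> = x ^ s * y ^ s * poly f x * poly g y * X ^ t * Y ^ t * ((1 - X * Y) / (x + y))"
    by (simp add: algebra_simps diff_divide_distrib)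
  also have "(1 - X * Y) / (x + y) = 2 / ((1 + x) * (1 + y))"
    using xy unfolding X_def Y_def by (intro one_sub_cayley_mult_cayley_div_add) auto
  also have "x ^ s * y ^ s * poly f x * poly g y * X ^ t * Y ^ t * (2 / ((1 + x) * (1 + y)))
    = 2 * (Lfun_integrand s t f x * Lfun_integrand s t g y)"
    using True unfolding p Lfun_integrand_def X_def[symmetric] Y_def[symmetric] by simp
  finally show ?thesis
    by (simp add: p)
next
  case False
  then have "Lfun_integrand s t f (fst p) * Lfun_integrand s t g (snd p) = 0"
    by (auto simp: mem_Times_iff Lfun_integrand_def)
  with False show ?thesis
    by (simp add: bform_integrand_def)
qed

theorem proposition2p2:
  fixes s t :: nat and f g :: "real poly"
  shows "bform (s + 1) t f g = bform s t ([:0, 1:] * f) ([:0, 1:] * g) \<and>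
         bform s (t + 1) f g = bform s t f g - Lfun s t f * Lfun s t g"
proof
  show "bform (s + 1) t f g = bform s t ([:0, 1:] * f) ([:0, 1:] * g)"
    unfolding bform_eq_integral bform_integrand_shift_s ..
  have "bform s (t + 1) f g
    = bform s t f g - 2 * (\<integral>p. Lfun_integrand s t f (fst p) * Lfun_integrand s t g (snd p) \<partial>lborel)"
    unfolding bform_eq_integral bform_integrand_shift_t
    using integrable_bform_integrand
      lborel_pair.integrable_mult_fst_snd[OF integrable_Lfun_integrand integrable_Lfun_integrand]
    by (simp add: lborel_prod)
  also have "\<dots> = bform s t f g - Lfun s t f * Lfun s t g"
    using lborel_pair.integral_mult_fst_snd[OF integrable_Lfun_integrand integrable_Lfun_integrand]
    by (simp add: lborel_prod Lfun_eq_integral)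
  finally show "bform s (t + 1) f g = bform s t f g - Lfun s t f * Lfun s t g" .
qed

end
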